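(* Let $R$ be a commutative Noetherian local ring and let $M,N$ be finitely generated $R$-modules. Suppose $M$ is strongly self dual with respect to $N$. Then $\operatorname{End}_R(M)$ admits an $R^*$-algebra structure such that $M_* \cong \operatorname{Hom}_R(M,N)$ as right $\operatorname{End}_R(M)$-modules, where $\operatorname{Hom}_R(M,N)$ is a right $\operatorname{End}_R(M)$-module via precomposition ($g\cdot f = g\circ f$).
   Context: An $R$-algebra $E$ (possibly noncommutative) is an $R^*$-algebra if there is a map of abelian groups $(-)^*:E\to E$ with $(ab)^*=b^*a^*$, $1_E^*=1_E$, $(ra)^*=ra^*$ for $r\in R$, and $a^{**}=a$ for all $a,b\in E$. If $E$ is an $R^*$-algebra and $M$ is a left $E$-module, $M_*$ denotes $M$ regarded as a right $E$-module via $x\cdot f = f^*x$. $M$ is a left module over $\operatorname{End}_R(M)$ via $f\cdot x=f(x)$. An $R$-module $M$ is strongly self dual with respect to an $R$-module $N$ if there is an $R$-module isomorphism $\alpha:M\to\operatorname{Hom}_R(M,N)$ with $\alpha(x)(y)=\alpha(y)(x)$ for all $x,y\in M$. *)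

theory Defs
  imports Complex_Main
begin

definition is_ideal :: "'a::comm_ring_1 set \<Rightarrow> bool" where
  "is_ideal I \<longleftrightarrow> 0 \<in> I \<and> (\<forall>x\<in>I. \<forall>y\<in>I. x + y \<in> I) \<and> (\<forall>r x. x \<in> I \<longrightarrow> r * x \<in> I)"

definition ideal_gen :: "'a::comm_ring_1 set \<Rightarrow> 'a set" where
  "ideal_gen S = {(\<Sum>s\<in>S. c s * s) | c. True}"

definition noetherian_ring :: "'a::comm_ring_1 itself \<Rightarrow> bool" where
  "noetherian_ring _ \<longleftrightarrow>
     (\<forall>I::'a set. is_ideal I \<longrightarrow> (\<exists>S. finite S \<and> S \<subseteq> I \<and> I = ideal_gen S))"

definition maximal_ideal :: "'a::comm_ring_1 set \<Rightarrow> bool" where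
  "maximal_ideal m \<longleftrightarrow> is_ideal m \<and> m \<noteq> UNIV \<and>
     (\<forall>J. is_ideal J \<and> m \<subseteq> J \<longrightarrow> J = m \<or> J = UNIV)"

definition local_ring :: "'a::comm_ring_1 itself \<Rightarrow> bool" where
  "local_ring _ \<longleftrightarrow> (\<exists>!m::'a set. maximal_ideal m)"

definition fin_gen_module :: "('a::comm_ring_1 \<Rightarrow> 'b::ab_group_add \<Rightarrow> 'b) \<Rightarrow> bool" where
  "fin_gen_module s \<longleftrightarrow> (\<exists>S. finite S \<and> module.span s S = UNIV)"

definition Hom :: "('a::comm_ring_1 \<Rightarrow> 'b::ab_group_add \<Rightarrow> 'b) \<Rightarrow> ('a \<Rightarrow> 'c::ab_group_add \<Rightarrow> 'c)
     \<Rightarrow> ('b \<Rightarrow> 'c) set" where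
  "Hom sM sN = {f. module_hom sM sN f}"

definition strongly_self_dual ::
  "('a::comm_ring_1 \<Rightarrow> 'b::ab_group_add \<Rightarrow> 'b) \<Rightarrow> ('a \<Rightarrow> 'c::ab_group_add \<Rightarrow> 'c) \<Rightarrow> bool" where
  "strongly_self_dual sM sN \<longleftrightarrow>
     (\<exists>\<alpha>. bij_betw \<alpha> UNIV (Hom sM sN)
        \<and> (\<forall>x y. \<alpha> (x + y) = (\<lambda>z. \<alpha> x z + \<alpha> y z))
        \<and> (\<forall>r x. \<alpha> (sM r x) = (\<lambda>z. sN r (\<alpha> x z)))
        \<and> (\<forall>x y. \<alpha> x y = \<alpha> y x))"

text \<open>An R^*-algebra structure on End_R(M) = Hom sM sM (product = composition, unit = id,
  R-action r.f = (x |-> r f(x))): an involutive additive anti-homomorphism, R-linear,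
  fixing the identity.\<close>
definition End_star_structure ::
  "('a::comm_ring_1 \<Rightarrow> 'b::ab_group_add \<Rightarrow> 'b) \<Rightarrow> (('b \<Rightarrow> 'b) \<Rightarrow> ('b \<Rightarrow> 'b)) \<Rightarrow> bool" where
  "End_star_structure sM star \<longleftrightarrow>
     (\<forall>f\<in>Hom sM sM. star f \<in> Hom sM sM)
   \<and> (\<forall>f\<in>Hom sM sM. \<forall>g\<in>Hom sM sM. star (\<lambda>x. f x + g x) = (\<lambda>x. star f x + star g x))
   \<and> (\<forall>f\<in>Hom sM sM. \<forall>g\<in>Hom sM sM. star (f \<circ> g) = star g \<circ> star f)
   \<and> star id = id
   \<and> (\<forall>r. \<forall>f\<in>Hom sM sM. star (\<lambda>x. sM r (f x)) = (\<lambda>x. sM r (star f x)))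
   \<and> (\<forall>f\<in>Hom sM sM. star (star f) = f)"

end

theory Submission
  imports Defs
begin

text \<open>Only the symmetric isomorphism \<open>\<alpha> : M \<cong> Hom(M,N)\<close> matters. The involution is the adjoint with respect to the
  symmetric pairing \<open>\<langle>x,y\<rangle> = \<alpha> x y\<close>: \<open>f\<^sup>*\<close> is determined by \<open>\<alpha> (f\<^sup>* x) = \<alpha> x \<circ> f\<close>, which
  exists because \<open>\<alpha> x \<circ> f \<in> Hom(M,N)\<close> and \<alpha> is onto, and is unique because \<alpha> is injective.
  Every axiom then follows by applying \<alpha> to both sides, symmetry of the pairing giving
  \<open>f\<^sup>*\<^sup>* = f\<close>; the defining identity says that \<alpha> itself is the isomorphism \<open>M\<^sub>* \<cong> Hom(M,N)\<close>.\<close>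

locale symmetric_self_duality =
  fixes sM :: "'r::comm_ring_1 \<Rightarrow> 'm::ab_group_add \<Rightarrow> 'm"
    and sN :: "'r \<Rightarrow> 'n::ab_group_add \<Rightarrow> 'n"
    and \<alpha> :: "'m \<Rightarrow> 'm \<Rightarrow> 'n"
  assumes bij_\<alpha>: "bij_betw \<alpha> UNIV (Hom sM sN)"
    and \<alpha>_add: "\<And>x y. \<alpha> (x + y) = (\<lambda>z. \<alpha> x z + \<alpha> y z)"
    and \<alpha>_scale: "\<And>r x. \<alpha> (sM r x) = (\<lambda>z. sN r (\<alpha> x z))"
    and \<alpha>_sym: "\<And>x y. \<alpha> x y = \<alpha> y x"
begin

lemma \<alpha>_inject: "\<alpha> x = \<alpha> y \<longleftrightarrow> x = y"
  using bij_\<alpha> by (auto simp: bij_betw_def inj_on_def)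

lemma module_hom_\<alpha>: "module_hom sM sN (\<alpha> x)"
  using bij_\<alpha> by (auto simp: bij_betw_def Hom_def)

interpretation End: module_pair sM sM
  using module_hom_\<alpha> by (simp add: module_pair_def module_hom_iff)

lemma module_hom_\<alpha>_apply:
  "\<alpha> x (a + b) = \<alpha> x a + \<alpha> x b" "\<alpha> x (sM r a) = sN r (\<alpha> x a)"
  using module_hom_\<alpha>[of x] by (simp_all add: module_hom_iff)

definition adjoint :: "('m \<Rightarrow> 'm) \<Rightarrow> 'm \<Rightarrow> 'm" where
  "adjoint f x = inv_into UNIV \<alpha> (\<alpha> x \<circ> f)"

lemma \<alpha>_adjoint:
  assumes "f \<in> Hom sM sM"
  shows "\<alpha> (adjoint f x) = \<alpha> x \<circ> f"
proof -
  have "module_hom sM sN (\<alpha> x \<circ> f)"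
    using assms module_hom_\<alpha> by (simp add: Hom_def module_hom_compose)
  then have "\<alpha> x \<circ> f \<in> range \<alpha>"
    using bij_\<alpha> by (simp add: bij_betw_def Hom_def)
  then show ?thesis
    unfolding adjoint_def by (rule f_inv_into_f)
qed

lemma adjoint_unique:
  assumes "f \<in> Hom sM sM" and "\<And>x z. \<alpha> (g x) z = \<alpha> x (f z)"
  shows "adjoint f = g"
  using assms by (auto simp: fun_eq_iff \<alpha>_adjoint simp flip: \<alpha>_inject)

lemma adjoint_in_Hom:
  assumes f: "f \<in> Hom sM sM"
  shows "adjoint f \<in> Hom sM sM"
proof -
  have "adjoint f (x + y) = adjoint f x + adjoint f y" for x y
    by (simp add: fun_eq_iff \<alpha>_adjoint[OF f] \<alpha>_add flip: \<alpha>_inject)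
  moreover have "adjoint f (sM r x) = sM r (adjoint f x)" for r x
    by (simp add: fun_eq_iff \<alpha>_adjoint[OF f] \<alpha>_scale flip: \<alpha>_inject)
  ultimately show ?thesis
    using End.m1.module_axioms by (simp add: Hom_def module_hom_iff)
qed

lemma adjoint_involutive:
  assumes f: "f \<in> Hom sM sM"
  shows "adjoint (adjoint f) = f"
proof (rule adjoint_unique[OF adjoint_in_Hom[OF f]])
  fix x z
  have "\<alpha> (f x) z = \<alpha> z (f x)" by (rule \<alpha>_sym)
  also have "\<dots> = \<alpha> (adjoint f z) x" by (simp add: \<alpha>_adjoint[OF f])
  also have "\<dots> = \<alpha> x (adjoint f z)" by (rule \<alpha>_sym)
  finally show "\<alpha> (f x) z = \<alpha> x (adjoint f z)" .
qed

lemma End_star_structure_adjoint: "End_star_structure sM adjoint"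
  unfolding End_star_structure_def
proof (intro conjI ballI allI)
  fix f g assume f: "f \<in> Hom sM sM" and g: "g \<in> Hom sM sM"
  show "adjoint (\<lambda>x. f x + g x) = (\<lambda>x. adjoint f x + adjoint g x)"
    using f g by (intro adjoint_unique)
      (simp_all add: Hom_def End.module_hom_add \<alpha>_add module_hom_\<alpha>_apply \<alpha>_adjoint[OF f]
        \<alpha>_adjoint[OF g])
  show "adjoint (f \<circ> g) = adjoint g \<circ> adjoint f"
    using f g by (intro adjoint_unique)
      (simp_all add: Hom_def module_hom_compose \<alpha>_adjoint[OF f] \<alpha>_adjoint[OF g])
next
  fix f r assume f: "f \<in> Hom sM sM"
  show "adjoint (\<lambda>x. sM r (f x)) = (\<lambda>x. sM r (adjoint f x))"
    using f by (intro adjoint_unique)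
      (simp_all add: Hom_def End.module_hom_scale \<alpha>_scale module_hom_\<alpha>_apply \<alpha>_adjoint[OF f])
next
  show "adjoint id = id"
    by (rule adjoint_unique) (simp_all add: Hom_def End.m1.module_hom_id)
qed (simp_all add: adjoint_in_Hom adjoint_involutive)

end

theorem proposition2p5:
  fixes sM :: "'r::comm_ring_1 \<Rightarrow> 'm::ab_group_add \<Rightarrow> 'm"
    and sN :: "'r \<Rightarrow> 'n::ab_group_add \<Rightarrow> 'n"
  assumes "noetherian_ring TYPE('r)" and "local_ring TYPE('r)"
    and "module sM" and "module sN"
    and "fin_gen_module sM" and "fin_gen_module sN"
    and "strongly_self_dual sM sN"
  shows "\<exists>star. End_star_structure sM star \<and>
           (\<exists>\<phi>::'m \<Rightarrow> ('m \<Rightarrow> 'n). bij_betw \<phi> UNIV (Hom sM sN)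
              \<and> (\<forall>x y. \<phi> (x + y) = (\<lambda>z. \<phi> x z + \<phi> y z))
              \<and> (\<forall>f\<in>Hom sM sM. \<forall>x. \<phi> (star f x) = \<phi> x \<circ> f))"
proof -
  obtain \<alpha> where "symmetric_self_duality sM sN \<alpha>"
    using \<open>strongly_self_dual sM sN\<close>
    unfolding strongly_self_dual_def symmetric_self_duality_def by blast
  then interpret symmetric_self_duality sM sN \<alpha> .
  show ?thesis
    using End_star_structure_adjoint bij_\<alpha> \<alpha>_add \<alpha>_adjoint by blast
qed

end
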